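(* Let $R$ be an atomic, integrally closed integral domain satisfying condition (C): whenever $I=(a_0,a_1)$ is a primitive ideal of $R$ generated by two elements, there exists an irreducible element $\alpha\in R$ with $\alpha\in I_v$. Then $R$ is a half-factorial domain if and only if $R$ has the Z-property.
   Context: Let $K$ be the quotient field of $R$. For a fractional ideal $I$, $I^{-1}=\{t\in K : tI\subseteq R\}$ and $I_v=(I^{-1})^{-1}$. A polynomial $f\in R[x]$ is primitive if its coefficients have no common nonunit divisor in $R$; a primitive ideal is an ideal $I\subseteq R$ equal to the ideal generated by the coefficients of some primitive polynomial $f\in R[x]$. A half-factorial domain is an atomic domain in which any two factorizations of a nonzero nonunit into irreducible elements have the same length. For $a,b\in R$, $[a,b]\neq 1$ means $a$ and $b$ have a common nonunit divisor, and $[a,b]=1$ means they do not. $R$ has the Z-property if whenever $a,b,c,d,e$ are nonzero nonunits of $R$ with $abc=de$, then $[ab,d]\neq 1$ or $[ab,e]\neq 1$. *)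

theory Defs
  imports "HOL-Computational_Algebra.Fraction_Field" "HOL-Computational_Algebra.Polynomial"
begin

definition emb :: "'a::idom \<Rightarrow> 'a fract" where
  "emb a = Fraction_Field.Fract a 1"

definition gen_ideal :: "'a::idom set \<Rightarrow> 'a set" where
  "gen_ideal S = {x. \<exists>F c. finite F \<and> F \<subseteq> S \<and> x = (\<Sum>s\<in>F. c s * s)}"

definition frac_inv :: "'a::idom fract set \<Rightarrow> 'a fract set" where
  "frac_inv J = {t. \<forall>x\<in>J. t * x \<in> range emb}"

definition v_closure :: "'a::idom fract set \<Rightarrow> 'a fract set" where
  "v_closure J = frac_inv (frac_inv J)"

definition common_nonunit :: "'a::idom \<Rightarrow> 'a \<Rightarrow> bool" where
  "common_nonunit a b \<longleftrightarrow> (\<exists>d. d dvd a \<and> d dvd b \<and> \<not> d dvd 1)"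

definition primitive_poly :: "'a::idom poly \<Rightarrow> bool" where
  "primitive_poly f \<longleftrightarrow> (\<forall>d. (\<forall>i. d dvd coeff f i) \<longrightarrow> d dvd 1)"

definition primitive_ideal :: "'a::idom set \<Rightarrow> bool" where
  "primitive_ideal I \<longleftrightarrow> (\<exists>f. primitive_poly f \<and> I = gen_ideal (range (coeff f)))"

definition atomic :: "'a::idom itself \<Rightarrow> bool" where
  "atomic _ \<longleftrightarrow> (\<forall>x::'a. x \<noteq> 0 \<and> \<not> x dvd 1 \<longrightarrow>
      (\<exists>xs. xs \<noteq> [] \<and> (\<forall>y\<in>set xs. irreducible y) \<and> x = prod_list xs))"

definition half_factorial :: "'a::idom itself \<Rightarrow> bool" where
  "half_factorial T \<longleftrightarrow> atomic T \<and>
     (\<forall>(x::'a) xs ys. x \<noteq> 0 \<and> \<not> x dvd 1 \<and>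
        (\<forall>y\<in>set xs. irreducible y) \<and> x = prod_list xs \<and>
        (\<forall>y\<in>set ys. irreducible y) \<and> x = prod_list ys \<longrightarrow> length xs = length ys)"

definition integrally_closed :: "'a::idom itself \<Rightarrow> bool" where
  "integrally_closed _ \<longleftrightarrow> (\<forall>t::'a fract.
     (\<exists>p::'a poly. lead_coeff p = 1 \<and> poly (map_poly emb p) t = 0) \<longrightarrow> t \<in> range emb)"

definition Z_property :: "'a::idom itself \<Rightarrow> bool" where
  "Z_property _ \<longleftrightarrow> (\<forall>a b c d e :: 'a.
     a \<noteq> 0 \<and> \<not> a dvd 1 \<and> b \<noteq> 0 \<and> \<not> b dvd 1 \<and> c \<noteq> 0 \<and> \<not> c dvd 1 \<and>
     d \<noteq> 0 \<and> \<not> d dvd 1 \<and> e \<noteq> 0 \<and> \<not> e dvd 1 \<and> a * b * c = d * e \<longrightarrow>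
     common_nonunit (a * b) d \<or> common_nonunit (a * b) e)"

definition condition_C :: "'a::idom itself \<Rightarrow> bool" where
  "condition_C _ \<longleftrightarrow> (\<forall>(a0::'a) a1. primitive_ideal (gen_ideal {a0, a1}) \<longrightarrow>
     (\<exists>\<alpha>. irreducible \<alpha> \<and> emb \<alpha> \<in> v_closure (emb ` gen_ideal {a0, a1})))"

end

theory Submission
  imports Defs
begin

(* Suppose abc = de with ab sharing no nonunit divisor with d nor with e. Condition (C) gives
   irreducibles \<alpha> \<in> (ab, d)_v and \<beta> \<in> (ab, e)_v. Testing these v-closures against d/ab and
   \<beta>/ab shows that ab divides d\<beta> and then \<alpha>\<beta>, say \<alpha>\<beta> = abw. In a half-factorial domain
   the lengths force w to be a unit, so \<alpha> is a common nonunit divisor of ab and d.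

   Conversely, assume the Z-property and let k < l be lengths of two factorizations of the same
   element, with k minimal. Applying the Z-property to p1 p2 P = d e (the first factorization
   of length k, split as p1 p2 P, the second split as d e) produces a common nonunit factor of
   p1 p2 and of d or e; cancelling it yields smaller elements with two factorizations, and
   minimality of k forces k = l. For k = 2 the roles of the two factorizations are swapped. *)

section \<open>Divisibility through v-closures\<close>

lemma emb_mult: "emb (a * b) = emb a * emb (b::'a::idom)"
  by (simp add: emb_def)

lemma emb_add: "emb (a + b) = emb a + emb (b::'a::idom)"
  by (simp add: emb_def)

lemma emb_0: "emb (0::'a::idom) = 0"
  by (simp add: emb_def Zero_fract_def)

lemma emb_sum: "emb (sum f F) = (\<Sum>s\<in>F. emb (f s :: 'a::idom))"
  by (induction F rule: infinite_finite_induct) (simp_all add: emb_0 emb_add)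

lemma Fract_in_range_emb_iff:
  fixes q :: "'a::idom"
  assumes "q \<noteq> 0"
  shows "Fraction_Field.Fract a q \<in> range emb \<longleftrightarrow> q dvd a"
proof
  assume "Fraction_Field.Fract a q \<in> range emb"
  then obtain r where "Fraction_Field.Fract a q = Fraction_Field.Fract r 1"
    by (auto simp: emb_def)
  then have "a = r * q" using assms by (simp add: eq_fract(1))
  then show "q dvd a" by simp
next
  assume "q dvd a"
  then obtain k where "a = q * k" by blast
  then have "Fraction_Field.Fract a q = emb k"
    using assms by (simp add: emb_def eq_fract(1) mult_ac)
  then show "Fraction_Field.Fract a q \<in> range emb" by (metis rangeI)
qed

lemma frac_inv_gen_ideal:
  fixes t :: "'a::idom fract"
  assumes "\<forall>s\<in>S. t * emb s \<in> range emb"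
  shows "t \<in> frac_inv (emb ` gen_ideal S)"
  unfolding frac_inv_def
proof (intro CollectI ballI)
  fix z assume "z \<in> emb ` gen_ideal S"
  then obtain F c where F: "finite F" "F \<subseteq> S" "z = emb (\<Sum>s\<in>F. c s * s)"
    unfolding gen_ideal_def by blast
  have "\<forall>s\<in>F. \<exists>r. t * emb s = emb r" using assms F(2) by blast
  then obtain g where g: "\<And>s. s \<in> F \<Longrightarrow> t * emb s = emb (g s)" by metis
  have "t * z = (\<Sum>s\<in>F. emb (c s) * (t * emb s))"
    by (simp add: F(3) emb_sum emb_mult sum_distrib_left mult_ac)
  also have "\<dots> = emb (\<Sum>s\<in>F. c s * g s)"
    by (simp add: g emb_mult emb_sum cong: sum.cong)
  finally show "t * z \<in> range emb" by simp
qed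

text \<open>The fraction \<open>s/q\<close> lies in the inverse of the ideal, so it maps \<open>\<alpha>\<close> into \<open>R\<close>.\<close>

lemma dvd_mult_v_closure:
  fixes q s \<alpha> :: "'a::idom"
  assumes "emb \<alpha> \<in> v_closure (emb ` gen_ideal S)" and "q \<noteq> 0"
    and "\<forall>y\<in>S. q dvd s * y"
  shows "q dvd s * \<alpha>"
proof -
  let ?t = "Fraction_Field.Fract s q"
  have t_emb: "?t * emb z = Fraction_Field.Fract (s * z) q" for z
    by (simp add: emb_def)
  have "?t \<in> frac_inv (emb ` gen_ideal S)"
    by (rule frac_inv_gen_ideal) (simp add: t_emb Fract_in_range_emb_iff assms(2,3))
  then have "emb \<alpha> * ?t \<in> range emb"
    using assms(1) unfolding v_closure_def frac_inv_def by blast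
  then show ?thesis
    by (simp add: mult.commute[of "emb \<alpha>"] t_emb Fract_in_range_emb_iff assms(2))
qed

lemma gen_ideal_insert_zero: "gen_ideal (insert 0 S) = gen_ideal (S::'a::idom set)"
proof
  show "gen_ideal S \<subseteq> gen_ideal (insert 0 S)" unfolding gen_ideal_def by blast
next
  show "gen_ideal (insert 0 S) \<subseteq> gen_ideal S"
  proof
    fix z assume "z \<in> gen_ideal (insert 0 S)"
    then obtain F c where F: "finite F" "F \<subseteq> insert 0 S" "z = (\<Sum>s\<in>F. c s * s)"
      unfolding gen_ideal_def by blast
    have "z = (\<Sum>s\<in>F - {0}. c s * s)"
      unfolding F(3) by (rule sum.mono_neutral_right) (use F in auto)
    moreover have "finite (F - {0})" "F - {0} \<subseteq> S" using F by auto
    ultimately show "z \<in> gen_ideal S" unfolding gen_ideal_def by blast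
  qed
qed

lemma primitive_ideal_pair:
  fixes x y :: "'a::idom"
  assumes "\<not> common_nonunit x y"
  shows "primitive_ideal (gen_ideal {x, y})"
proof -
  let ?f = "[:x, y:]"
  have "range (coeff ?f) = {0, x, y}"
  proof
    show "range (coeff ?f) \<subseteq> {0, x, y}"
      by (auto simp: coeff_pCons split: nat.splits)
    have "coeff ?f 0 = x" "coeff ?f 1 = y" "coeff ?f 2 = 0"
      by (simp_all add: numeral_2_eq_2)
    then show "{0, x, y} \<subseteq> range (coeff ?f)"
      by (metis rangeI empty_subsetI insert_subset)
  qed
  then have "gen_ideal (range (coeff ?f)) = gen_ideal {x, y}"
    by (simp add: gen_ideal_insert_zero)
  moreover have "primitive_poly ?f"
    unfolding primitive_poly_def
  proof (intro allI impI)
    fix d assume "\<forall>i. d dvd coeff ?f i"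
    then have "d dvd coeff ?f 0" "d dvd coeff ?f 1" by blast+
    then have "d dvd x" "d dvd y" by simp_all
    then show "d dvd 1" using assms unfolding common_nonunit_def by blast
  qed
  ultimately show ?thesis unfolding primitive_ideal_def by blast
qed

section \<open>Factorization lengths\<close>

lemma mult_dvd_one_iff: "a * b dvd (1::'a::comm_semiring_1) \<longleftrightarrow> a dvd 1 \<and> b dvd 1"
  using mult_dvd_mono[of a 1 b 1] by (auto dest: dvd_mult_left dvd_mult_right)

lemma dvd_mult_unit_cancel:
  fixes a b w :: "'a::comm_semiring_1"
  assumes "w dvd 1" and "a dvd b * w"
  shows "a dvd b"
proof -
  from assms(1) obtain w' where "1 = w * w'" by blast
  then have "b * w dvd b" by (metis dvd_triv_left mult.assoc mult_1_right)
  with assms(2) show ?thesis by (rule dvd_trans)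
qed

lemma irreducible_unit_mult:
  assumes "u dvd 1" and "irreducible (p::'a::idom)"
  shows "irreducible (u * p)"
proof (rule irreducibleI)
  obtain u' where u': "1 = u * u'" using assms(1) by blast
  show "u * p \<noteq> 0" using u' assms(2) by auto
  show "\<not> u * p dvd 1" using assms(2) irreducible_not_unit mult_dvd_one_iff by blast
  fix a b assume "u * p = a * b"
  then have "p = (u' * a) * b" using u' by (metis mult.assoc mult.commute mult_1_left)
  then have "u' * a dvd 1 \<or> b dvd 1" using assms(2) irreducibleD by blast
  then show "a dvd 1 \<or> b dvd 1"
    using assms(1) mult_dvd_one_iff[of u "u' * a"] u' by (auto simp: mult.assoc[symmetric])
qed

lemma prod_list_irreducible_dvd_one_iff:
  "\<forall>y\<in>set xs. irreducible (y::'a::idom) \<Longrightarrow> prod_list xs dvd 1 \<longleftrightarrow> xs = []"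
  by (induction xs) (auto simp: mult_dvd_one_iff irreducible_not_unit)

definition factors_into :: "'a::idom \<Rightarrow> nat \<Rightarrow> bool" where
  "factors_into x k \<longleftrightarrow>
     (\<exists>u xs. u dvd 1 \<and> (\<forall>y\<in>set xs. irreducible y) \<and> length xs = k \<and> x = u * prod_list xs)"

lemma factors_into_prod_list:
  "\<forall>y\<in>set xs. irreducible y \<Longrightarrow> factors_into (prod_list xs) (length xs)"
  unfolding factors_into_def by (intro exI[of _ 1] exI[of _ xs]) simp

lemma factors_into_mult:
  assumes "factors_into x k" and "factors_into y l"
  shows "factors_into (x * y) (k + l)"
proof -
  obtain u xs where "u dvd 1" "\<forall>y\<in>set xs. irreducible y" "length xs = k" "x = u * prod_list xs"
    using assms(1) unfolding factors_into_def by blast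
  moreover obtain v ys where "v dvd 1" "\<forall>y\<in>set ys. irreducible y" "length ys = l" "y = v * prod_list ys"
    using assms(2) unfolding factors_into_def by blast
  ultimately show ?thesis
    unfolding factors_into_def
    by (intro exI[of _ "u * v"] exI[of _ "xs @ ys"]) (auto simp: mult_ac mult_dvd_one_iff)
qed

lemma factors_into_exists:
  assumes "atomic TYPE('a)" and "(x::'a::idom) \<noteq> 0"
  obtains k where "factors_into x k"
proof (cases "x dvd 1")
  case True
  then have "factors_into x 0" unfolding factors_into_def by (intro exI[of _ x] exI[of _ "[]"]) simp
  then show ?thesis by (rule that)
next
  case False
  then obtain xs where "\<forall>y\<in>set xs. irreducible y" "x = prod_list xs"
    using assms unfolding atomic_def by blast
  then show ?thesis using factors_into_prod_list that by blast
qed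

lemma factors_into_nonzero: "factors_into x k \<Longrightarrow> x \<noteq> 0"
  unfolding factors_into_def by (fastforce simp: prod_list_zero_iff)

lemma factors_into_dvd_one_iff:
  assumes "factors_into x k"
  shows "x dvd 1 \<longleftrightarrow> k = 0"
proof -
  obtain u xs where "u dvd 1" "\<forall>y\<in>set xs. irreducible y" "length xs = k" "x = u * prod_list xs"
    using assms unfolding factors_into_def by blast
  then show ?thesis by (auto simp: mult_dvd_one_iff prod_list_irreducible_dvd_one_iff)
qed

lemma factors_into_positive_nonunit:
  "factors_into y j \<Longrightarrow> 0 < j \<Longrightarrow> y \<noteq> 0 \<and> \<not> y dvd 1"
  using factors_into_nonzero factors_into_dvd_one_iff by blast

lemma factors_into_nonunit_positive:
  "factors_into y j \<Longrightarrow> \<not> y dvd 1 \<Longrightarrow> 1 \<le> j"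
  using factors_into_dvd_one_iff by fastforce

lemma factors_into_add_split:
  assumes "factors_into x (a + b)"
  obtains y z where "x = y * z" "factors_into y a" "factors_into z b"
proof -
  obtain u xs where u: "u dvd 1" and xs: "\<forall>y\<in>set xs. irreducible y" "length xs = a + b"
    and x: "x = u * prod_list xs"
    using assms unfolding factors_into_def by blast
  have "x = (u * prod_list (take a xs)) * prod_list (drop a xs)"
    by (metis x append_take_drop_id prod_list.append mult.assoc)
  moreover have "factors_into (u * prod_list (take a xs)) a"
    unfolding factors_into_def using u xs
    by (intro exI[of _ u] exI[of _ "take a xs"]) (auto dest: in_set_takeD)
  moreover have "factors_into (prod_list (drop a xs)) b"
    using factors_into_prod_list[of "drop a xs"] xs by (auto dest: in_set_dropD)
  ultimately show ?thesis by (rule that)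
qed

lemma factors_into_one_irreducible: "factors_into x 1 \<Longrightarrow> irreducible x"
  unfolding factors_into_def by (auto simp: length_Suc_conv irreducible_unit_mult)

section \<open>Half-factoriality and the Z-property\<close>

lemma half_factorial_lengthD:
  fixes x :: "'a::idom"
  assumes "half_factorial TYPE('a)" and "x \<noteq> 0" "\<not> x dvd 1"
    and "\<forall>y\<in>set xs. irreducible y" "x = prod_list xs"
    and "\<forall>y\<in>set ys. irreducible y" "x = prod_list ys"
  shows "length xs = length ys"
  using assms unfolding half_factorial_def by blast

lemma half_factorial_unit_cofactor:
  assumes hf: "half_factorial TYPE('a::idom)"
    and "a \<noteq> 0" "\<not> a dvd 1" "b \<noteq> 0" "\<not> b dvd 1"
    and irr: "irreducible \<alpha>" "irreducible \<beta>" and eq: "a * b * w = \<alpha> * (\<beta>::'a)"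
  shows "w dvd 1"
proof (rule ccontr)
  assume "\<not> w dvd 1"
  have "\<alpha> * \<beta> \<noteq> 0" using irr by (auto simp: irreducible_def)
  then have "w \<noteq> 0" using eq by auto
  have factorization: "\<exists>xs. xs \<noteq> [] \<and> (\<forall>y\<in>set xs. irreducible y) \<and> y = prod_list xs"
    if "y \<noteq> 0" "\<not> y dvd 1" for y :: 'a
    using hf that unfolding half_factorial_def atomic_def by blast
  obtain as where as: "as \<noteq> []" "\<forall>y\<in>set as. irreducible y" "a = prod_list as"
    using factorization assms(2,3) by blast
  obtain bs where bs: "bs \<noteq> []" "\<forall>y\<in>set bs. irreducible y" "b = prod_list bs"
    using factorization assms(4,5) by blast
  obtain ws where ws: "ws \<noteq> []" "\<forall>y\<in>set ws. irreducible y" "w = prod_list ws"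
    using factorization \<open>w \<noteq> 0\<close> \<open>\<not> w dvd 1\<close> by blast
  have "length (as @ bs @ ws) = length [\<alpha>, \<beta>]"
  proof (rule half_factorial_lengthD[OF hf \<open>\<alpha> * \<beta> \<noteq> 0\<close>])
    show "\<not> \<alpha> * \<beta> dvd 1" using irr irreducible_not_unit mult_dvd_one_iff by blast
    show "\<alpha> * \<beta> = prod_list (as @ bs @ ws)" using eq as bs ws by (simp add: mult.assoc)
  qed (use as bs ws irr in auto)
  moreover have "length (as @ bs @ ws) \<ge> 3" using as(1) bs(1) ws(1)
    by (cases as; cases bs; cases ws) auto
  ultimately show False by simp
qed

lemma half_factorial_imp_Z_property:
  assumes hf: "half_factorial TYPE('a::idom)" and C: "condition_C TYPE('a)"
  shows "Z_property TYPE('a)"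
  unfolding Z_property_def
proof (intro allI impI)
  fix a b c d e :: 'a
  assume h: "a \<noteq> 0 \<and> \<not> a dvd 1 \<and> b \<noteq> 0 \<and> \<not> b dvd 1 \<and> c \<noteq> 0 \<and> \<not> c dvd 1 \<and>
     d \<noteq> 0 \<and> \<not> d dvd 1 \<and> e \<noteq> 0 \<and> \<not> e dvd 1 \<and> a * b * c = d * e"
  show "common_nonunit (a * b) d \<or> common_nonunit (a * b) e"
  proof (rule ccontr)
    define x where "x = a * b"
    assume "\<not> (common_nonunit (a * b) d \<or> common_nonunit (a * b) e)"
    then have coprime_d: "\<not> common_nonunit x d" and coprime_e: "\<not> common_nonunit x e"
      by (auto simp: x_def)
    obtain \<alpha> where \<alpha>: "irreducible \<alpha>" "emb \<alpha> \<in> v_closure (emb ` gen_ideal {x, d})"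
      using C primitive_ideal_pair[OF coprime_d] unfolding condition_C_def by blast
    obtain \<beta> where \<beta>: "irreducible \<beta>" "emb \<beta> \<in> v_closure (emb ` gen_ideal {x, e})"
      using C primitive_ideal_pair[OF coprime_e] unfolding condition_C_def by blast
    have "x \<noteq> 0" using h by (simp add: x_def)
    have "d * e = x * c" using h by (simp add: x_def)
    then have "x dvd d * \<beta>"
      using dvd_mult_v_closure[OF \<beta>(2) \<open>x \<noteq> 0\<close>] by simp
    then have "x dvd \<beta> * \<alpha>"
      using dvd_mult_v_closure[OF \<alpha>(2) \<open>x \<noteq> 0\<close>, of \<beta>] by (simp add: mult.commute)
    then obtain w where w: "\<beta> * \<alpha> = x * w" by blast
    then have "a * b * w = \<alpha> * \<beta>" by (simp add: x_def mult.commute)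
    then have "w dvd 1"
      using half_factorial_unit_cofactor[OF hf _ _ _ _ \<alpha>(1) \<beta>(1)] h by blast
    obtain k where k: "d * \<beta> = x * k" using \<open>x dvd d * \<beta>\<close> by blast
    have "\<beta> * (d * w) = \<beta> * (\<alpha> * k)"
      by (metis k w mult.assoc mult.commute)
    then have "\<alpha> dvd d * w" using \<beta>(1) by (auto simp: irreducible_def)
    then have "\<alpha> dvd d" using dvd_mult_unit_cancel[OF \<open>w dvd 1\<close>] by blast
    moreover have "\<alpha> dvd x" using dvd_mult_unit_cancel[OF \<open>w dvd 1\<close>] w
      by (metis dvd_triv_right)
    ultimately have "common_nonunit x d"
      unfolding common_nonunit_def using \<alpha>(1) irreducible_not_unit by blast
    with coprime_d show False by contradiction
  qed
qed

lemma Z_property_common_factor: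
  fixes a b c d e :: "'a::idom"
  assumes "Z_property TYPE('a)"
    and "\<forall>y\<in>{a, b, c, d, e}. y \<noteq> 0 \<and> \<not> y dvd 1" and "a * b * c = d * e"
  obtains \<delta> \<epsilon> \<eta> D D' where "\<not> \<delta> dvd 1" "a * b = \<delta> * \<epsilon>" "D = \<delta> * \<eta>" "\<epsilon> * c = \<eta> * D'"
    "(D = d \<and> D' = e) \<or> (D = e \<and> D' = d)"
proof -
  have "common_nonunit (a * b) d \<or> common_nonunit (a * b) e"
    using assms unfolding Z_property_def by blast
  then obtain \<delta> D D' where \<delta>: "\<not> \<delta> dvd 1" "\<delta> dvd a * b" "\<delta> dvd D"
    and DD': "(D = d \<and> D' = e) \<or> (D = e \<and> D' = d)"
    unfolding common_nonunit_def by blast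
  obtain \<epsilon> \<eta> where \<epsilon>: "a * b = \<delta> * \<epsilon>" and \<eta>: "D = \<delta> * \<eta>" using \<delta> by blast
  have "\<delta> \<noteq> 0" using \<epsilon> assms(2) by auto
  have "\<delta> * (\<epsilon> * c) = \<delta> * (\<eta> * D')"
    using assms(3) \<epsilon> \<eta> DD' by (auto simp: mult_ac)
  then have "\<epsilon> * c = \<eta> * D'" using \<open>\<delta> \<noteq> 0\<close> by simp
  with \<delta>(1) \<epsilon> \<eta> DD' show ?thesis using that by blast
qed

lemma factorization_length_step_two:
  fixes x :: "'a::idom"
  assumes at: "atomic TYPE('a)" and Z: "Z_property TYPE('a)"
    and shorter: "\<And>y j i. j < 2 \<Longrightarrow> factors_into (y::'a) j \<Longrightarrow> factors_into y i \<Longrightarrow> j = i"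
    and x2: "factors_into x 2" and xl: "factors_into x l" and "2 < l"
  shows False
proof -
  obtain p1 p2 where p: "x = p1 * p2" "factors_into p1 1" "factors_into p2 1"
    using x2[folded one_add_one] by (rule factors_into_add_split)
  have "l = 1 + (l - 1)" "l - 1 = 1 + (l - 2)" using \<open>2 < l\<close> by auto
  obtain q1 R where q1: "x = q1 * R" "factors_into q1 1" "factors_into R (l - 1)"
    using xl \<open>l = 1 + (l - 1)\<close> factors_into_add_split by metis
  obtain q2 Q3 where q2: "R = q2 * Q3" "factors_into q2 1" "factors_into Q3 (l - 2)"
    using q1(3) \<open>l - 1 = 1 + (l - 2)\<close> factors_into_add_split by metis
  have "\<forall>y\<in>{q1, q2, Q3, p1, p2}. y \<noteq> 0 \<and> \<not> y dvd 1"
    using p q1 q2 \<open>2 < l\<close> factors_into_positive_nonunit by fastforce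
  moreover have "q1 * q2 * Q3 = p1 * p2" using p q1 q2 by (simp add: mult_ac)
  ultimately obtain \<delta> \<epsilon> \<eta> D D' where \<delta>: "\<not> \<delta> dvd 1" and \<epsilon>: "q1 * q2 = \<delta> * \<epsilon>"
    and \<eta>: "D = \<delta> * \<eta>" and cancel: "\<epsilon> * Q3 = \<eta> * D'"
    and DD': "(D = p1 \<and> D' = p2) \<or> (D = p2 \<and> D' = p1)"
    by (rule Z_property_common_factor[OF Z])
  have D: "factors_into D 1" "factors_into D' 1" using DD' p by auto
  have "q1 * q2 \<noteq> 0" "D \<noteq> 0" using q1 q2 D factors_into_nonzero by auto
  then have "\<delta> \<noteq> 0" "\<epsilon> \<noteq> 0" "\<eta> \<noteq> 0" using \<epsilon> \<eta> by auto
  then obtain r t h where r: "factors_into \<delta> r" and t: "factors_into \<epsilon> t" and h: "factors_into \<eta> h"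
    using factors_into_exists[OF at] by metis
  have "1 \<le> r" using factors_into_nonunit_positive[OF r \<delta>] .
  have "r + h = 1" using shorter[of 1 D "r + h"] D(1) factors_into_mult[OF r h] \<eta> by simp
  have "h = 0" using \<open>r + h = 1\<close> \<open>1 \<le> r\<close> by simp
  have "t + (l - 2) = 1"
    using shorter[of 1 "\<eta> * D'" "t + (l - 2)"] factors_into_mult[OF h D(2)]
      factors_into_mult[OF t q2(3)] cancel \<open>h = 0\<close> by simp
  then have "r + t = 1" using \<open>r + h = 1\<close> \<open>1 \<le> r\<close> \<open>2 < l\<close> by linarith
  then have "factors_into (q1 * q2) 1" using factors_into_mult[OF r t] \<epsilon> by simp
  moreover have "factors_into (q1 * q2) 2"
    using factors_into_mult[OF q1(2) q2(2)] by (simp add: numeral_2_eq_2)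
  ultimately show False using shorter[of 1 "q1 * q2" 2] by simp
qed

lemma factorization_length_step_ge_three:
  fixes x :: "'a::idom"
  assumes at: "atomic TYPE('a)" and Z: "Z_property TYPE('a)"
    and shorter: "\<And>y j i. j < k \<Longrightarrow> factors_into (y::'a) j \<Longrightarrow> factors_into y i \<Longrightarrow> j = i"
    and xk: "factors_into x k" and xl: "factors_into x l" and "3 \<le> k" "k < l"
  shows False
proof -
  have "k = 1 + (k - 1)" "k - 1 = 1 + (k - 2)" "l = 1 + (l - 1)" using \<open>3 \<le> k\<close> \<open>k < l\<close> by auto
  obtain p1 R where p1: "x = p1 * R" "factors_into p1 1" "factors_into R (k - 1)"
    using xk \<open>k = 1 + (k - 1)\<close> factors_into_add_split by metis
  obtain p2 P3 where p2: "R = p2 * P3" "factors_into p2 1" "factors_into P3 (k - 2)"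
    using p1(3) \<open>k - 1 = 1 + (k - 2)\<close> factors_into_add_split by metis
  obtain d e where de: "x = d * e" "factors_into d 1" "factors_into e (l - 1)"
    using xl \<open>l = 1 + (l - 1)\<close> factors_into_add_split by metis
  have "\<forall>y\<in>{p1, p2, P3, d, e}. y \<noteq> 0 \<and> \<not> y dvd 1"
    using p1 p2 de \<open>3 \<le> k\<close> \<open>k < l\<close> factors_into_positive_nonunit by fastforce
  moreover have "p1 * p2 * P3 = d * e" using p1 p2 de by (simp add: mult_ac)
  ultimately obtain \<delta> \<epsilon> \<eta> D D' where \<delta>: "\<not> \<delta> dvd 1" and \<epsilon>: "p1 * p2 = \<delta> * \<epsilon>"
    and \<eta>: "D = \<delta> * \<eta>" and cancel: "\<epsilon> * P3 = \<eta> * D'"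
    and DD': "(D = d \<and> D' = e) \<or> (D = e \<and> D' = d)"
    by (rule Z_property_common_factor[OF Z])
  obtain s where D: "factors_into D s" "factors_into D' (l - s)" "s < l"
  proof (cases "D = d")
    case True
    then show ?thesis using that[of 1] DD' de \<open>3 \<le> k\<close> \<open>k < l\<close> by auto
  next
    case False
    then show ?thesis using that[of "l - 1"] DD' de \<open>3 \<le> k\<close> \<open>k < l\<close> by auto
  qed
  have "p1 * p2 \<noteq> 0" "D \<noteq> 0" using p1 p2 D factors_into_nonzero by auto
  then have "\<delta> \<noteq> 0" "\<epsilon> \<noteq> 0" "\<eta> \<noteq> 0" using \<epsilon> \<eta> by auto
  then obtain r t h where r: "factors_into \<delta> r" and t: "factors_into \<epsilon> t" and h: "factors_into \<eta> h"
    using factors_into_exists[OF at] by metis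
  have "1 \<le> r" using factors_into_nonunit_positive[OF r \<delta>] .
  have "factors_into (p1 * p2) 2"
    using factors_into_mult[OF p1(2) p2(2)] by (simp add: numeral_2_eq_2)
  then have "2 = r + t"
    using shorter factors_into_mult[OF r t] \<epsilon> \<open>3 \<le> k\<close> by simp
  then have "t + (k - 2) = h + (l - s)"
    using shorter[of "t + (k - 2)" "\<epsilon> * P3"] factors_into_mult[OF t p2(3)]
      factors_into_mult[OF h D(2)] cancel \<open>1 \<le> r\<close> \<open>3 \<le> k\<close> by simp
  then have "r + h = s"
    using shorter[of "r + h" D s] factors_into_mult[OF r h] \<eta> D \<open>2 = r + t\<close> \<open>3 \<le> k\<close> by simp
  with \<open>2 = r + t\<close> \<open>t + (k - 2) = h + (l - s)\<close> \<open>s < l\<close> \<open>3 \<le> k\<close> \<open>k < l\<close>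
  show False by linarith
qed

lemma Z_property_factorization_length_unique:
  fixes x :: "'a::idom"
  assumes at: "atomic TYPE('a)" and Z: "Z_property TYPE('a)"
    and "factors_into x k" "factors_into x l"
  shows "k = l"
  using assms(3,4)
proof (induction k arbitrary: x l rule: less_induct)
  case (less k)
  have shorter: "j = i" if "j < k" "factors_into y j" "factors_into y i" for y :: 'a and j i
    using less.IH that by blast
  show "k = l"
  proof (rule ccontr)
    assume "k \<noteq> l"
    then have "k < l" using shorter[of l x k] less.prems by linarith
    consider "k = 0" | "k = 1" | "k = 2" | "3 \<le> k" by linarith
    then show False
    proof cases
      case 1
      then show False using less.prems \<open>k < l\<close> factors_into_dvd_one_iff by blast
    next
      case 2
      have "l = 1 + (l - 1)" using \<open>k < l\<close> by simp
      then obtain y z where "x = y * z" "factors_into y 1" "factors_into z (l - 1)"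
        using less.prems(2) factors_into_add_split by metis
      moreover have "irreducible x" using less.prems(1) 2 factors_into_one_irreducible by blast
      ultimately show False
        using irreducibleD factors_into_dvd_one_iff \<open>k < l\<close> 2 by fastforce
    next
      case 3
      then show False
        using factorization_length_step_two[OF at Z] shorter less.prems \<open>k < l\<close> by blast
    next
      case 4
      show False
        by (rule factorization_length_step_ge_three[OF at Z _ less.prems 4 \<open>k < l\<close>]) (use shorter in blast)
    qed
  qed
qed

lemma Z_property_imp_half_factorial:
  assumes "atomic TYPE('a::idom)" and "Z_property TYPE('a)"
  shows "half_factorial TYPE('a)"
  unfolding half_factorial_def
  using assms factors_into_prod_list Z_property_factorization_length_unique by metis

theorem mainTheorem2:
  assumes "atomic TYPE('a::idom)"
    and "integrally_closed TYPE('a)"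
    and "condition_C TYPE('a)"
  shows "half_factorial TYPE('a) \<longleftrightarrow> Z_property TYPE('a)"
  using assms(1,3) half_factorial_imp_Z_property Z_property_imp_half_factorial by blast

end
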